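(* Assume (A1)–(A4) and $\eta_x,\eta_z>0$ (see context). Then the iterates of the Jacobi scheme satisfy, for all $k\ge1$, $$\Delta\Phi^k\le-\eta_x\sum_{t=1}^T\Big(\|\Delta x_t^k\|^2_{A_t^\top A_t}+\|\Delta x_t^{k-1}\|^2_{A_t^\top A_t}\Big)-\eta_z\Big(\|\Delta z^k\|^2+\|\Delta z^{k-1}\|^2\Big).$$
   Context: Let $T\ge1$, $[T]=\{1,\dots,T\}$; for $t\in[T]$: $X_t\subseteq\mathbb{R}^{n_t}$, $f_t:\mathbb{R}^{n_t}\to\mathbb{R}$, $A_t\in\mathbb{R}^{m\times n_t}$; $b\in\mathbb{R}^m$; $X=\prod_tX_t$, $A=[A_1\cdots A_T]$, $Ax=\sum_tA_tx_t$, $A_{\neq t}x_{\neq t}=\sum_{s\neq t}A_sx_s$; $\|w\|_M=\sqrt{w^\top Mw}$. Assumptions: (A1) $X_t$ nonempty compact; (A2) $f_t$ is $C^2$; (A3) $A$ full row rank; (A4) $\{x\in X:Ax=b\}\neq\emptyset$. Parameters $\rho,\theta,\tau_x,\tau_z>0$ with $\eta_x:=\frac{\tau_x}{4}-\frac{(T-1)\rho}{2}>0$, $\eta_z:=\frac{\tau_z}{4}-\frac{2(\theta+\tau_z)^2}{\rho}>0$. $\mathcal{L}(x,z,\lambda)=\sum_tf_t(x_t)+\frac{\theta}{2}\|z\|^2+\lambda^\top(Ax+z-b)+\frac{\rho}{2}\|Ax+z-b\|^2$. Jacobi scheme: given $x^0\in X$, $z^0,\lambda^0\in\mathbb{R}^m$,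 for $k\ge1$: (i) for each $t$, $x_t^k$ is a local minimizer, computed by a solver warm-started at $x_t^{k-1}$ (so that its subproblem objective does not exceed that of $x_t^{k-1}$), of $\min_{x_t\in X_t}f_t(x_t)+(\lambda^{k-1})^\top A_tx_t+\frac{\rho}{2}\|A_tx_t+A_{\neq t}x^{k-1}_{\neq t}+z^{k-1}-b\|^2+\frac{\tau_x}{2}\|x_t-x_t^{k-1}\|^2_{A_t^\top A_t}$; (ii) $z^k=(\tau_zz^{k-1}-\rho(Ax^k-b)-\lambda^{k-1})/(\tau_z+\rho+\theta)$; (iii) $\lambda^k=\lambda^{k-1}+\rho(Ax^k+z^k-b)$. $\Phi(x,z,\lambda,\hat x,\hat z)=\mathcal{L}(x,z,\lambda)+\frac{\tau_z}{4}\|z-\hat z\|^2+\sum_t\frac{\tau_x}{4}\|x_t-\hat x_t\|^2_{A_t^\top A_t}$; $\Phi^k=\Phi(x^k,z^k,\lambda^k,x^{k-1},z^{k-1})$ for $k\ge1$. For $k\ge1$: $\Delta x^k=x^k-x^{k-1}$, $\Delta z^k=z^k-z^{k-1}$, $\Delta\Phi^k=\Phi^k-\Phi^{k-1}$. Also $\Delta z^0=-\tau_z^{-1}(\lambda^0+\theta z^0)$, $\Delta x^0=0$, $\Phi^0=\mathcal{L}(x^0,z^0,\lambda^0)+\frac{\tau_z}{4}\|\Delta z^0\|^2$. *)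

theory Defs
  imports "HOL-Analysis.Analysis"
begin

text \<open>A vector of R^n is modelled as a function v :: nat => real whose
coordinates j >= n vanish (the set Rn n). Blocks are indexed by t in {1..T}.
An m x n_t matrix A_t is a function nat => nat => real (entries A_t i j, i < m, j < n_t).\<close>

definition Rn :: "nat \<Rightarrow> (nat \<Rightarrow> real) set" where
  "Rn n = {v. \<forall>j\<ge>n. v j = 0}"

definition sqn :: "nat \<Rightarrow> (nat \<Rightarrow> real) \<Rightarrow> real" where
  "sqn m w = (\<Sum>i<m. (w i)^2)"

definition ip :: "nat \<Rightarrow> (nat \<Rightarrow> real) \<Rightarrow> (nat \<Rightarrow> real) \<Rightarrow> real" where
  "ip m u v = (\<Sum>i<m. u i * v i)"

definition vdist :: "nat \<Rightarrow> (nat \<Rightarrow> real) \<Rightarrow> (nat \<Rightarrow> real) \<Rightarrow> real" where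
  "vdist n u v = sqrt (\<Sum>j<n. (u j - v j)^2)"

definition matvec :: "nat \<Rightarrow> nat \<Rightarrow> (nat \<Rightarrow> nat \<Rightarrow> real) \<Rightarrow> (nat \<Rightarrow> real) \<Rightarrow> (nat \<Rightarrow> real)" where
  "matvec m n M v = (\<lambda>i. if i < m then (\<Sum>j<n. M i j * v j) else 0)"

text \<open>The squared seminorm ||w||^2_{A_t^T A_t} = w^T A_t^T A_t w = ||A_t w||^2.\<close>
definition sqnAtA :: "nat \<Rightarrow> nat \<Rightarrow> (nat \<Rightarrow> nat \<Rightarrow> real) \<Rightarrow> (nat \<Rightarrow> real) \<Rightarrow> real" where
  "sqnAtA m n M w = sqn m (matvec m n M w)"

definition Aop :: "nat \<Rightarrow> (nat \<Rightarrow> nat) \<Rightarrow> (nat \<Rightarrow> nat \<Rightarrow> nat \<Rightarrow> real) \<Rightarrow> nat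
    \<Rightarrow> (nat \<Rightarrow> nat \<Rightarrow> real) \<Rightarrow> (nat \<Rightarrow> real)" where
  "Aop m n A T x = (\<lambda>i. \<Sum>t\<in>{1..T}. matvec m (n t) (A t) (x t) i)"

definition Aop_ne :: "nat \<Rightarrow> (nat \<Rightarrow> nat) \<Rightarrow> (nat \<Rightarrow> nat \<Rightarrow> nat \<Rightarrow> real) \<Rightarrow> nat
    \<Rightarrow> nat \<Rightarrow> (nat \<Rightarrow> nat \<Rightarrow> real) \<Rightarrow> (nat \<Rightarrow> real)" where
  "Aop_ne m n A T t x = (\<lambda>i. \<Sum>s\<in>{1..T} - {t}. matvec m (n s) (A s) (x s) i)"

definition full_row_rank :: "nat \<Rightarrow> (nat \<Rightarrow> nat) \<Rightarrow> (nat \<Rightarrow> nat \<Rightarrow> nat \<Rightarrow> real) \<Rightarrow> nat \<Rightarrow> bool" where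
  "full_row_rank m n A T \<longleftrightarrow>
     (\<forall>c :: nat \<Rightarrow> real. (\<forall>t\<in>{1..T}. \<forall>j<n t. (\<Sum>i<m. c i * A t i j) = 0) \<longrightarrow> (\<forall>i<m. c i = 0))"

definition pderiv_at :: "nat \<Rightarrow> ((nat \<Rightarrow> real) \<Rightarrow> real) \<Rightarrow> (nat \<Rightarrow> real) \<Rightarrow> real" where
  "pderiv_at j g x = deriv (\<lambda>s. g (x(j := x j + s))) 0"

definition C2_on_Rn :: "nat \<Rightarrow> ((nat \<Rightarrow> real) \<Rightarrow> real) \<Rightarrow> bool" where
  "C2_on_Rn n g \<longleftrightarrow>
     continuous_on (Rn n) g \<and>
     (\<forall>j<n. \<forall>x\<in>Rn n. (\<lambda>s. g (x(j := x j + s))) differentiable (at 0)) \<and>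
     (\<forall>j<n. continuous_on (Rn n) (pderiv_at j g)) \<and>
     (\<forall>i<n. \<forall>j<n. \<forall>x\<in>Rn n. (\<lambda>s. pderiv_at j g (x(i := x i + s))) differentiable (at 0)) \<and>
     (\<forall>i<n. \<forall>j<n. continuous_on (Rn n) (pderiv_at i (pderiv_at j g)))"

definition local_min_on :: "nat \<Rightarrow> ((nat \<Rightarrow> real) \<Rightarrow> real) \<Rightarrow> (nat \<Rightarrow> real) set \<Rightarrow> (nat \<Rightarrow> real) \<Rightarrow> bool" where
  "local_min_on n S X y \<longleftrightarrow> y \<in> X \<and> (\<exists>e>0. \<forall>u\<in>X. vdist n u y < e \<longrightarrow> S y \<le> S u)"

definition AL :: "nat \<Rightarrow> (nat \<Rightarrow> nat) \<Rightarrow> nat \<Rightarrow> (nat \<Rightarrow> (nat \<Rightarrow> real) \<Rightarrow> real)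
    \<Rightarrow> (nat \<Rightarrow> nat \<Rightarrow> nat \<Rightarrow> real) \<Rightarrow> (nat \<Rightarrow> real) \<Rightarrow> real \<Rightarrow> real
    \<Rightarrow> (nat \<Rightarrow> nat \<Rightarrow> real) \<Rightarrow> (nat \<Rightarrow> real) \<Rightarrow> (nat \<Rightarrow> real) \<Rightarrow> real" where
  "AL m n T f A b \<theta> \<rho> x z lam =
     (let r = (\<lambda>i. Aop m n A T x i + z i - b i) in
      (\<Sum>t\<in>{1..T}. f t (x t)) + \<theta>/2 * sqn m z + ip m lam r + \<rho>/2 * sqn m r)"

definition Phi :: "nat \<Rightarrow> (nat \<Rightarrow> nat) \<Rightarrow> nat \<Rightarrow> (nat \<Rightarrow> (nat \<Rightarrow> real) \<Rightarrow> real)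
    \<Rightarrow> (nat \<Rightarrow> nat \<Rightarrow> nat \<Rightarrow> real) \<Rightarrow> (nat \<Rightarrow> real) \<Rightarrow> real \<Rightarrow> real \<Rightarrow> real \<Rightarrow> real
    \<Rightarrow> (nat \<Rightarrow> nat \<Rightarrow> real) \<Rightarrow> (nat \<Rightarrow> real) \<Rightarrow> (nat \<Rightarrow> real)
    \<Rightarrow> (nat \<Rightarrow> nat \<Rightarrow> real) \<Rightarrow> (nat \<Rightarrow> real) \<Rightarrow> real" where
  "Phi m n T f A b \<theta> \<rho> \<tau>x \<tau>z x z lam xh zh =
     AL m n T f A b \<theta> \<rho> x z lam + \<tau>z/4 * sqn m (\<lambda>i. z i - zh i)
     + (\<Sum>t\<in>{1..T}. \<tau>x/4 * sqnAtA m (n t) (A t) (\<lambda>j. x t j - xh t j))"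

text \<open>Objective of the t-th x-subproblem at iteration k (given the previous iterates
xp = x^{k-1}, zp = z^{k-1}, lp = lambda^{k-1}).\<close>
definition subobj :: "nat \<Rightarrow> (nat \<Rightarrow> nat) \<Rightarrow> nat \<Rightarrow> (nat \<Rightarrow> (nat \<Rightarrow> real) \<Rightarrow> real)
    \<Rightarrow> (nat \<Rightarrow> nat \<Rightarrow> nat \<Rightarrow> real) \<Rightarrow> (nat \<Rightarrow> real) \<Rightarrow> real \<Rightarrow> real
    \<Rightarrow> nat \<Rightarrow> (nat \<Rightarrow> nat \<Rightarrow> real) \<Rightarrow> (nat \<Rightarrow> real) \<Rightarrow> (nat \<Rightarrow> real)
    \<Rightarrow> (nat \<Rightarrow> real) \<Rightarrow> real" where
  "subobj m n T f A b \<rho> \<tau>x t xp zp lp y =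
     f t y + ip m lp (matvec m (n t) (A t) y)
     + \<rho>/2 * sqn m (\<lambda>i. matvec m (n t) (A t) y i + Aop_ne m n A T t xp i + zp i - b i)
     + \<tau>x/2 * sqnAtA m (n t) (A t) (\<lambda>j. y j - xp t j)"

definition Dx :: "(nat \<Rightarrow> nat \<Rightarrow> nat \<Rightarrow> real) \<Rightarrow> nat \<Rightarrow> nat \<Rightarrow> (nat \<Rightarrow> real)" where
  "Dx x k t = (if k = 0 then (\<lambda>j. 0) else (\<lambda>j. x k t j - x (k - 1) t j))"

definition Dz :: "real \<Rightarrow> real \<Rightarrow> (nat \<Rightarrow> nat \<Rightarrow> real) \<Rightarrow> (nat \<Rightarrow> nat \<Rightarrow> real) \<Rightarrow> nat \<Rightarrow> (nat \<Rightarrow> real)" where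
  "Dz \<theta> \<tau>z z lam k = (if k = 0 then (\<lambda>i. - (lam 0 i + \<theta> * z 0 i) / \<tau>z)
                      else (\<lambda>i. z k i - z (k - 1) i))"

definition PhiSeq :: "nat \<Rightarrow> (nat \<Rightarrow> nat) \<Rightarrow> nat \<Rightarrow> (nat \<Rightarrow> (nat \<Rightarrow> real) \<Rightarrow> real)
    \<Rightarrow> (nat \<Rightarrow> nat \<Rightarrow> nat \<Rightarrow> real) \<Rightarrow> (nat \<Rightarrow> real) \<Rightarrow> real \<Rightarrow> real \<Rightarrow> real \<Rightarrow> real
    \<Rightarrow> (nat \<Rightarrow> nat \<Rightarrow> nat \<Rightarrow> real) \<Rightarrow> (nat \<Rightarrow> nat \<Rightarrow> real) \<Rightarrow> (nat \<Rightarrow> nat \<Rightarrow> real) \<Rightarrow> nat \<Rightarrow> real" where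
  "PhiSeq m n T f A b \<theta> \<rho> \<tau>x \<tau>z x z lam k =
     (if k = 0 then AL m n T f A b \<theta> \<rho> (x 0) (z 0) (lam 0) + \<tau>z/4 * sqn m (Dz \<theta> \<tau>z z lam 0)
      else Phi m n T f A b \<theta> \<rho> \<tau>x \<tau>z (x k) (z k) (lam k) (x (k - 1)) (z (k - 1)))"

end

theory Submission
  imports Defs
begin

(* The change of Phi splits into the changes of the augmented Lagrangian along the three
   updates plus the changes of the proximal terms.  The blocks of x are updated in parallel
   from x^{k-1}, so summing the descent of the T subproblems leaves the cross terms
   ||sum_t A_t Dx_t||^2, which Cauchy-Schwarz bounds by T sum_t ||A_t Dx_t||^2.  The z-update
   minimises a strongly convex quadratic and lowers L by exactly (tau_z + (theta + rho)/2) ||Dz^k||^2.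
   The multiplier update raises L by ||Dlam^k||^2 / rho, and the optimality condition of the
   z-update gives lam^k = - theta z^k - tau_z Dz^k, so Dlam^k is a combination of Dz^k and
   Dz^{k-1}. *)

lemma sqn_nonneg: "0 \<le> sqn m u"
  unfolding sqn_def by (simp add: sum_nonneg)

lemma ip_add_right: "ip m u (\<lambda>i. v i + w i) = ip m u v + ip m u w"
  unfolding ip_def by (simp add: distrib_left sum.distrib)

lemma ip_sum_right: "ip m u (\<lambda>i. \<Sum>t\<in>S. v t i) = (\<Sum>t\<in>S. ip m u (v t))"
  unfolding ip_def by (simp add: sum_distrib_left sum.swap[of _ S])

lemma sqn_add: "sqn m (\<lambda>i. u i + v i) = sqn m u + 2 * ip m u v + sqn m v"
  unfolding sqn_def ip_def by (simp add: power2_sum sum.distrib sum_distrib_left mult.assoc)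

lemma sqn_sum_le_card_mult:
  "sqn m (\<lambda>i. \<Sum>t\<in>S. v t i) \<le> real (card S) * (\<Sum>t\<in>S. sqn m (v t))"
proof -
  have "sqn m (\<lambda>i. \<Sum>t\<in>S. v t i) \<le> (\<Sum>i<m. real (card S) * (\<Sum>t\<in>S. (v t i)^2))"
    unfolding sqn_def
    by (intro sum_mono) (use sum_squared_le_sum_of_squares in \<open>simp add: mult.commute\<close>)
  also have "\<dots> = real (card S) * (\<Sum>t\<in>S. sqn m (v t))"
    unfolding sqn_def sum_distrib_left[symmetric] by (subst sum.swap) simp
  finally show ?thesis .
qed

lemma sqn_lincomb_le:
  "sqn m (\<lambda>i. a * u i + c * v i) \<le> 2 * a^2 * sqn m u + 2 * c^2 * sqn m v"
proof -
  have "(a * u i + c * v i)^2 \<le> 2 * a^2 * (u i)^2 + 2 * c^2 * (v i)^2" for i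
  proof -
    have "0 \<le> (a * u i - c * v i)^2" by simp
    then show ?thesis by (simp add: power2_eq_square algebra_simps)
  qed
  then have "sqn m (\<lambda>i. a * u i + c * v i) \<le> (\<Sum>i<m. 2 * a^2 * (u i)^2 + 2 * c^2 * (v i)^2)"
    unfolding sqn_def by (rule sum_mono)
  then show ?thesis
    by (simp add: sqn_def sum.distrib sum_distrib_left mult.assoc)
qed

lemma matvec_diff: "matvec m n M (\<lambda>j. u j - v j) i = matvec m n M u i - matvec m n M v i"
  by (simp add: matvec_def sum_subtractf right_diff_distrib)

lemma sqnAtA_zero: "sqnAtA m n M (\<lambda>j. 0) = 0"
  by (simp add: sqnAtA_def sqn_def matvec_def)

lemma Aop_eq_matvec_add_Aop_ne:
  "t \<in> {1..T} \<Longrightarrow> Aop m n A T x i = matvec m (n t) (A t) (x t) i + Aop_ne m n A T t x i"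
  unfolding Aop_def Aop_ne_def by (simp add: sum.remove)

definition residual :: "nat \<Rightarrow> (nat \<Rightarrow> nat) \<Rightarrow> (nat \<Rightarrow> nat \<Rightarrow> nat \<Rightarrow> real) \<Rightarrow> nat
    \<Rightarrow> (nat \<Rightarrow> real) \<Rightarrow> (nat \<Rightarrow> nat \<Rightarrow> real) \<Rightarrow> (nat \<Rightarrow> real) \<Rightarrow> (nat \<Rightarrow> real)" where
  "residual m n A T b x z = (\<lambda>i. Aop m n A T x i + z i - b i)"

lemma AL_eq_residual:
  "AL m n T f A b \<theta> \<rho> x z l = (\<Sum>t\<in>{1..T}. f t (x t)) + \<theta>/2 * sqn m z
     + ip m l (residual m n A T b x z) + \<rho>/2 * sqn m (residual m n A T b x z)"
  by (simp add: AL_def Let_def residual_def)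

lemma residual_update_x:
  "residual m n A T b xn z i
     = residual m n A T b xo z i + (\<Sum>t\<in>{1..T}. matvec m (n t) (A t) (\<lambda>j. xn t j - xo t j) i)"
  by (simp add: residual_def Aop_def matvec_diff sum_subtractf)

lemma ip_sqn_shift:
  "ip m l (\<lambda>i. w i + u i) + \<rho>/2 * sqn m (\<lambda>i. w i + u i)
     = ip m l w + \<rho>/2 * sqn m w + ip m (\<lambda>i. l i + \<rho> * w i) u + \<rho>/2 * sqn m u"
  by (simp add: ip_add_right sqn_add ip_def sum.distrib sum_distrib_left algebra_simps)

lemma subobj_update_diff:
  assumes "t \<in> {1..T}"
  shows "subobj m n T f A b \<rho> \<tau>x t xo zo lo (xn t) - subobj m n T f A b \<rho> \<tau>x t xo zo lo (xo t)
    = f t (xn t) - f t (xo t)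
      + ip m (\<lambda>i. lo i + \<rho> * residual m n A T b xo zo i) (matvec m (n t) (A t) (\<lambda>j. xn t j - xo t j))
      + (\<rho> + \<tau>x)/2 * sqnAtA m (n t) (A t) (\<lambda>j. xn t j - xo t j)"
proof -
  define u where "u = matvec m (n t) (A t) (\<lambda>j. xn t j - xo t j)"
  define v where "v = matvec m (n t) (A t) (xo t)"
  define w where "w = residual m n A T b xo zo"
  have coupling: "(\<lambda>i. matvec m (n t) (A t) y i + Aop_ne m n A T t xo i + zo i - b i)
      = (\<lambda>i. w i + (matvec m (n t) (A t) y i - v i))" for y
    using Aop_eq_matvec_add_Aop_ne[OF assms, of m n A xo] by (simp add: w_def v_def residual_def algebra_simps)
  have "subobj m n T f A b \<rho> \<tau>x t xo zo lo (xn t)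
      = f t (xn t) + ip m lo (\<lambda>i. v i + u i) + \<rho>/2 * sqn m (\<lambda>i. w i + u i) + \<tau>x/2 * sqn m u"
    by (simp add: subobj_def coupling sqnAtA_def u_def v_def matvec_diff)
  moreover have "subobj m n T f A b \<rho> \<tau>x t xo zo lo (xo t)
      = f t (xo t) + ip m lo v + \<rho>/2 * sqn m w"
    by (simp add: subobj_def coupling sqnAtA_zero v_def)
  ultimately show ?thesis
    using ip_sqn_shift[of m lo w u \<rho>]
    by (simp add: ip_add_right sqnAtA_def u_def[symmetric] w_def[symmetric] algebra_simps
        add_divide_distrib)
qed

lemma AL_update_x_diff:
  "AL m n T f A b \<theta> \<rho> xn z l - AL m n T f A b \<theta> \<rho> xo z l
    = (\<Sum>t\<in>{1..T}. f t (xn t) - f t (xo t))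
      + ip m (\<lambda>i. l i + \<rho> * residual m n A T b xo z i)
          (\<lambda>i. \<Sum>t\<in>{1..T}. matvec m (n t) (A t) (\<lambda>j. xn t j - xo t j) i)
      + \<rho>/2 * sqn m (\<lambda>i. \<Sum>t\<in>{1..T}. matvec m (n t) (A t) (\<lambda>j. xn t j - xo t j) i)"
  using ip_sqn_shift[of m l "residual m n A T b xo z"
      "\<lambda>i. \<Sum>t\<in>{1..T}. matvec m (n t) (A t) (\<lambda>j. xn t j - xo t j) i" \<rho>]
  unfolding AL_eq_residual residual_update_x[of m n A T b xn z _ xo]
  by (simp add: sum_subtractf)

lemma AL_update_x_le:
  assumes "0 \<le> \<rho>"
    and descent: "\<forall>t\<in>{1..T}.
      subobj m n T f A b \<rho> \<tau>x t xo zo lo (xn t) \<le> subobj m n T f A b \<rho> \<tau>x t xo zo lo (xo t)"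
  shows "AL m n T f A b \<theta> \<rho> xn zo lo - AL m n T f A b \<theta> \<rho> xo zo lo
    \<le> ((real T - 1) * \<rho> / 2 - \<tau>x / 2) * (\<Sum>t\<in>{1..T}. sqnAtA m (n t) (A t) (\<lambda>j. xn t j - xo t j))"
proof -
  define u where "u t = matvec m (n t) (A t) (\<lambda>j. xn t j - xo t j)" for t
  define g where "g = (\<lambda>i. lo i + \<rho> * residual m n A T b xo zo i)"
  define D where "D = (\<Sum>t\<in>{1..T}. f t (xn t) - f t (xo t))"
  define S where "S = (\<Sum>t\<in>{1..T}. sqn m (u t))"
  have "(\<Sum>t\<in>{1..T}. subobj m n T f A b \<rho> \<tau>x t xo zo lo (xn t)
                    - subobj m n T f A b \<rho> \<tau>x t xo zo lo (xo t)) \<le> 0"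
    using descent by (intro sum_nonpos) auto
  then have sum_descent: "D + ip m g (\<lambda>i. \<Sum>t\<in>{1..T}. u t i) + (\<rho> + \<tau>x)/2 * S \<le> 0"
    by (simp add: subobj_update_diff sum.distrib ip_sum_right sum_distrib_left
        D_def S_def g_def u_def sqnAtA_def)
  have "sqn m (\<lambda>i. \<Sum>t\<in>{1..T}. u t i) \<le> real T * S"
    using sqn_sum_le_card_mult[of m u "{1..T}"] by (simp add: S_def)
  then have "\<rho>/2 * sqn m (\<lambda>i. \<Sum>t\<in>{1..T}. u t i) \<le> \<rho>/2 * (real T * S)"
    using assms(1) by (intro mult_left_mono) auto
  moreover have "AL m n T f A b \<theta> \<rho> xn zo lo - AL m n T f A b \<theta> \<rho> xo zo lo
      = D + ip m g (\<lambda>i. \<Sum>t\<in>{1..T}. u t i) + \<rho>/2 * sqn m (\<lambda>i. \<Sum>t\<in>{1..T}. u t i)"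
    by (simp add: AL_update_x_diff D_def g_def u_def)
  moreover have "((real T - 1) * \<rho> / 2 - \<tau>x / 2) * S = \<rho>/2 * (real T * S) - (\<rho> + \<tau>x)/2 * S"
    by (simp add: field_simps)
  ultimately show ?thesis
    using sum_descent by (simp add: S_def u_def sqnAtA_def)
qed

(* The hypothesis is the z-update solved for the multiplier. *)
lemma AL_update_z_eq:
  assumes z_opt: "\<forall>i. l i = \<tau> * zo i - \<rho> * (Aop m n A T x i - b i) - (\<tau> + \<rho> + \<theta>) * zn i"
  shows "AL m n T f A b \<theta> \<rho> x zn l - AL m n T f A b \<theta> \<rho> x zo l
    = - (\<tau> + (\<theta> + \<rho>)/2) * sqn m (\<lambda>i. zn i - zo i)"
proof -
  define a where "a i = Aop m n A T x i - b i" for i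
  have coordinate: "\<theta>/2 * (zn i)^2 + l i * (a i + zn i) + \<rho>/2 * (a i + zn i)^2
      - (\<theta>/2 * (zo i)^2 + l i * (a i + zo i) + \<rho>/2 * (a i + zo i)^2)
      = - (\<tau> + (\<theta> + \<rho>)/2) * (zn i - zo i)^2" for i
    unfolding z_opt[rule_format] by (simp add: a_def power2_eq_square field_simps)
  have "AL m n T f A b \<theta> \<rho> x zn l - AL m n T f A b \<theta> \<rho> x zo l
      = (\<Sum>i<m. \<theta>/2 * (zn i)^2 + l i * (a i + zn i) + \<rho>/2 * (a i + zn i)^2
          - (\<theta>/2 * (zo i)^2 + l i * (a i + zo i) + \<rho>/2 * (a i + zo i)^2))"
    by (simp add: AL_eq_residual residual_def a_def sqn_def ip_def sum_subtractf sum.distrib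
        sum_distrib_left algebra_simps)
  also have "\<dots> = (\<Sum>i<m. - (\<tau> + (\<theta> + \<rho>)/2) * (zn i - zo i)^2)"
    using coordinate by simp
  finally show ?thesis
    by (simp add: sqn_def sum_distrib_left)
qed

lemma AL_update_lam_eq:
  assumes "\<rho> \<noteq> 0" and l'_def: "\<forall>i. l' i = l i + \<rho> * residual m n A T b x z i"
  shows "AL m n T f A b \<theta> \<rho> x z l' - AL m n T f A b \<theta> \<rho> x z l = sqn m (\<lambda>i. l' i - l i) / \<rho>"
proof -
  define r where "r = residual m n A T b x z"
  have "AL m n T f A b \<theta> \<rho> x z l' - AL m n T f A b \<theta> \<rho> x z l = \<rho> * sqn m r"
    by (simp add: AL_eq_residual l'_def r_def ip_def sqn_def sum.distrib sum_distrib_left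
        power2_eq_square algebra_simps)
  moreover have "sqn m (\<lambda>i. l' i - l i) = \<rho>^2 * sqn m r"
    by (simp add: l'_def r_def sqn_def sum_distrib_left power_mult_distrib)
  ultimately show ?thesis
    using assms(1) by (simp add: power2_eq_square)
qed

(* At k = 0 this is the defining convention for Dz^0. *)
lemma lam_eq_Dz:
  assumes "\<tau>z \<noteq> 0" and "\<tau>z + \<rho> + \<theta> \<noteq> 0"
    and step_z: "\<forall>k\<ge>1. z k = (\<lambda>i. (\<tau>z * z (k - 1) i - \<rho> * (Aop m n A T (x k) i - b i) - lam (k - 1) i)
                                 / (\<tau>z + \<rho> + \<theta>))"
    and step_lam: "\<forall>k\<ge>1. lam k = (\<lambda>i. lam (k - 1) i + \<rho> * (Aop m n A T (x k) i + z k i - b i))"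
  shows "lam k i = - \<theta> * z k i - \<tau>z * Dz \<theta> \<tau>z z lam k i"
proof (cases k)
  case 0
  then show ?thesis using assms(1) by (simp add: Dz_def field_simps)
next
  case (Suc p)
  have "z k i * (\<tau>z + \<rho> + \<theta>) = \<tau>z * z p i - \<rho> * (Aop m n A T (x k) i - b i) - lam p i"
    using step_z Suc assms(2) by simp
  moreover have "lam k i = lam p i + \<rho> * (Aop m n A T (x k) i + z k i - b i)"
    using step_lam Suc by simp
  ultimately show ?thesis
    using Suc by (simp add: Dz_def algebra_simps)
qed

lemma lam_increment_eq_Dz:
  assumes "\<tau>z \<noteq> 0" and "\<tau>z + \<rho> + \<theta> \<noteq> 0"
    and step_z: "\<forall>k\<ge>1. z k = (\<lambda>i. (\<tau>z * z (k - 1) i - \<rho> * (Aop m n A T (x k) i - b i) - lam (k - 1) i)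
                                 / (\<tau>z + \<rho> + \<theta>))"
    and step_lam: "\<forall>k\<ge>1. lam k = (\<lambda>i. lam (k - 1) i + \<rho> * (Aop m n A T (x k) i + z k i - b i))"
    and "1 \<le> k"
  shows "lam k i - lam (k - 1) i = - (\<theta> + \<tau>z) * Dz \<theta> \<tau>z z lam k i + \<tau>z * Dz \<theta> \<tau>z z lam (k - 1) i"
proof -
  have "z k i = z (k - 1) i + Dz \<theta> \<tau>z z lam k i"
    using \<open>1 \<le> k\<close> by (simp add: Dz_def)
  then show ?thesis
    unfolding lam_eq_Dz[OF assms(1-4), of k] lam_eq_Dz[OF assms(1-4), of "k - 1"]
    by (simp add: algebra_simps)
qed

lemma AL_iteration_le:
  assumes params: "0 < \<rho>" "0 \<le> \<theta>" "0 < \<tau>z" and "1 \<le> k"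
    and descent: "\<forall>t\<in>{1..T}.
      subobj m n T f A b \<rho> \<tau>x t (x (k - 1)) (z (k - 1)) (lam (k - 1)) (x k t)
      \<le> subobj m n T f A b \<rho> \<tau>x t (x (k - 1)) (z (k - 1)) (lam (k - 1)) (x (k - 1) t)"
    and step_z: "\<forall>k\<ge>1. z k = (\<lambda>i. (\<tau>z * z (k - 1) i - \<rho> * (Aop m n A T (x k) i - b i) - lam (k - 1) i)
                                 / (\<tau>z + \<rho> + \<theta>))"
    and step_lam: "\<forall>k\<ge>1. lam k = (\<lambda>i. lam (k - 1) i + \<rho> * (Aop m n A T (x k) i + z k i - b i))"
  shows "AL m n T f A b \<theta> \<rho> (x k) (z k) (lam k) - AL m n T f A b \<theta> \<rho> (x (k - 1)) (z (k - 1)) (lam (k - 1))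
    \<le> ((real T - 1) * \<rho> / 2 - \<tau>x / 2) * (\<Sum>t\<in>{1..T}. sqnAtA m (n t) (A t) (Dx x k t))
      + (2 * (\<theta> + \<tau>z)^2 / \<rho> - (\<tau>z + (\<theta> + \<rho>)/2)) * sqn m (Dz \<theta> \<tau>z z lam k)
      + 2 * \<tau>z^2 / \<rho> * sqn m (Dz \<theta> \<tau>z z lam (k - 1))"
proof -
  obtain p where k: "k = Suc p" using \<open>1 \<le> k\<close> by (cases k) auto
  let ?AL = "AL m n T f A b \<theta> \<rho>"
  let ?DZ = "\<lambda>k. sqn m (Dz \<theta> \<tau>z z lam k)"
  have pos: "\<tau>z + \<rho> + \<theta> \<noteq> 0" using params by simp
  have x_step: "?AL (x k) (z p) (lam p) - ?AL (x p) (z p) (lam p)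
      \<le> ((real T - 1) * \<rho> / 2 - \<tau>x / 2) * (\<Sum>t\<in>{1..T}. sqnAtA m (n t) (A t) (Dx x k t))"
    using AL_update_x_le[of \<rho> T m n f A b \<tau>x "x p" "z p" "lam p" "x k" \<theta>] params descent
    by (simp add: k Dx_def)
  have "\<forall>i. lam p i = \<tau>z * z p i - \<rho> * (Aop m n A T (x k) i - b i) - (\<tau>z + \<rho> + \<theta>) * z k i"
    using step_z pos by (simp add: k field_simps)
  from AL_update_z_eq[OF this]
  have z_step: "?AL (x k) (z k) (lam p) - ?AL (x k) (z p) (lam p) = - (\<tau>z + (\<theta> + \<rho>)/2) * ?DZ k"
    by (simp add: k Dz_def)
  have "\<forall>i. lam k i = lam p i + \<rho> * residual m n A T b (x k) (z k) i"
    using step_lam by (simp add: k residual_def)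
  then have "?AL (x k) (z k) (lam k) - ?AL (x k) (z k) (lam p) = sqn m (\<lambda>i. lam k i - lam p i) / \<rho>"
    using params by (simp add: AL_update_lam_eq)
  also have "(\<lambda>i. lam k i - lam p i) = (\<lambda>i. - (\<theta> + \<tau>z) * Dz \<theta> \<tau>z z lam k i + \<tau>z * Dz \<theta> \<tau>z z lam p i)"
    using lam_increment_eq_Dz[OF _ pos step_z step_lam \<open>1 \<le> k\<close>] params by (simp add: k)
  also have "sqn m \<dots> / \<rho> \<le> (2 * (\<theta> + \<tau>z)^2 * ?DZ k + 2 * \<tau>z^2 * ?DZ p) / \<rho>"
    using params sqn_lincomb_le[of m "- (\<theta> + \<tau>z)" "Dz \<theta> \<tau>z z lam k" \<tau>z "Dz \<theta> \<tau>z z lam p",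
        unfolded power2_minus]
    by (intro divide_right_mono) auto
  finally have lam_step: "?AL (x k) (z k) (lam k) - ?AL (x k) (z k) (lam p)
      \<le> 2 * (\<theta> + \<tau>z)^2 / \<rho> * ?DZ k + 2 * \<tau>z^2 / \<rho> * ?DZ p"
    by (simp add: add_divide_distrib)
  have "?AL (x k) (z k) (lam k) - ?AL (x p) (z p) (lam p)
      = (?AL (x k) (z k) (lam k) - ?AL (x k) (z k) (lam p)) + (?AL (x k) (z k) (lam p) - ?AL (x k) (z p) (lam p))
        + (?AL (x k) (z p) (lam p) - ?AL (x p) (z p) (lam p))"
    by simp
  also have "\<dots> \<le> (2 * (\<theta> + \<tau>z)^2 / \<rho> * ?DZ k + 2 * \<tau>z^2 / \<rho> * ?DZ p)
        + - (\<tau>z + (\<theta> + \<rho>)/2) * ?DZ k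
        + ((real T - 1) * \<rho> / 2 - \<tau>x / 2) * (\<Sum>t\<in>{1..T}. sqnAtA m (n t) (A t) (Dx x k t))"
    using lam_step z_step x_step by linarith
  finally show ?thesis
    by (simp add: k algebra_simps)
qed

lemma PhiSeq_eq_AL:
  "PhiSeq m n T f A b \<theta> \<rho> \<tau>x \<tau>z x z lam k
    = AL m n T f A b \<theta> \<rho> (x k) (z k) (lam k) + \<tau>z/4 * sqn m (Dz \<theta> \<tau>z z lam k)
      + \<tau>x/4 * (\<Sum>t\<in>{1..T}. sqnAtA m (n t) (A t) (Dx x k t))"
  by (cases k) (simp_all add: PhiSeq_def Phi_def Dx_def Dz_def sqnAtA_zero sum_distrib_left)

lemma PhiSeq_diff_le:
  assumes params: "0 < \<rho>" "0 \<le> \<theta>" "0 < \<tau>z" and "1 \<le> k"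
    and descent: "\<forall>t\<in>{1..T}.
      subobj m n T f A b \<rho> \<tau>x t (x (k - 1)) (z (k - 1)) (lam (k - 1)) (x k t)
      \<le> subobj m n T f A b \<rho> \<tau>x t (x (k - 1)) (z (k - 1)) (lam (k - 1)) (x (k - 1) t)"
    and step_z: "\<forall>k\<ge>1. z k = (\<lambda>i. (\<tau>z * z (k - 1) i - \<rho> * (Aop m n A T (x k) i - b i) - lam (k - 1) i)
                                 / (\<tau>z + \<rho> + \<theta>))"
    and step_lam: "\<forall>k\<ge>1. lam k = (\<lambda>i. lam (k - 1) i + \<rho> * (Aop m n A T (x k) i + z k i - b i))"
  shows "PhiSeq m n T f A b \<theta> \<rho> \<tau>x \<tau>z x z lam k - PhiSeq m n T f A b \<theta> \<rho> \<tau>x \<tau>z x z lam (k - 1)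
    \<le> ((real T - 1) * \<rho> / 2 - \<tau>x / 4) * (\<Sum>t\<in>{1..T}. sqnAtA m (n t) (A t) (Dx x k t))
      - \<tau>x / 4 * (\<Sum>t\<in>{1..T}. sqnAtA m (n t) (A t) (Dx x (k - 1) t))
      + (2 * (\<theta> + \<tau>z)^2 / \<rho> - 3 * \<tau>z / 4 - (\<theta> + \<rho>) / 2) * sqn m (Dz \<theta> \<tau>z z lam k)
      + (2 * \<tau>z^2 / \<rho> - \<tau>z / 4) * sqn m (Dz \<theta> \<tau>z z lam (k - 1))"
  using AL_iteration_le[OF assms] unfolding PhiSeq_eq_AL by (simp add: algebra_simps)

theorem lemma2:
  fixes T m :: nat and n :: "nat \<Rightarrow> nat"
    and X :: "nat \<Rightarrow> (nat \<Rightarrow> real) set"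
    and f :: "nat \<Rightarrow> (nat \<Rightarrow> real) \<Rightarrow> real"
    and A :: "nat \<Rightarrow> nat \<Rightarrow> nat \<Rightarrow> real"
    and b :: "nat \<Rightarrow> real"
    and \<rho> \<theta> \<tau>x \<tau>z \<eta>x \<eta>z :: real
    and x :: "nat \<Rightarrow> nat \<Rightarrow> nat \<Rightarrow> real"
    and z lam :: "nat \<Rightarrow> nat \<Rightarrow> real"
  assumes T_pos: "T \<ge> 1"
    and A1: "\<forall>t\<in>{1..T}. X t \<subseteq> Rn (n t) \<and> X t \<noteq> {} \<and> compact (X t)"
    and A2: "\<forall>t\<in>{1..T}. C2_on_Rn (n t) (f t)"
    and A3: "full_row_rank m n A T"
    and A4: "\<exists>y. (\<forall>t\<in>{1..T}. y t \<in> X t) \<and> (\<forall>i<m. Aop m n A T y i = b i)"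
    and b_dim: "b \<in> Rn m"
    and params: "\<rho> > 0" "\<theta> > 0" "\<tau>x > 0" "\<tau>z > 0"
    and eta_x: "\<eta>x = \<tau>x / 4 - (real T - 1) * \<rho> / 2" and eta_x_pos: "\<eta>x > 0"
    and eta_z: "\<eta>z = \<tau>z / 4 - 2 * (\<theta> + \<tau>z)^2 / \<rho>" and eta_z_pos: "\<eta>z > 0"
    and init: "\<forall>t\<in>{1..T}. x 0 t \<in> X t" "z 0 \<in> Rn m" "lam 0 \<in> Rn m"
    and step_x: "\<forall>k\<ge>1. \<forall>t\<in>{1..T}.
        local_min_on (n t) (subobj m n T f A b \<rho> \<tau>x t (x (k - 1)) (z (k - 1)) (lam (k - 1))) (X t) (x k t)
        \<and> subobj m n T f A b \<rho> \<tau>x t (x (k - 1)) (z (k - 1)) (lam (k - 1)) (x k t)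
          \<le> subobj m n T f A b \<rho> \<tau>x t (x (k - 1)) (z (k - 1)) (lam (k - 1)) (x (k - 1) t)"
    and step_z: "\<forall>k\<ge>1. z k = (\<lambda>i. (\<tau>z * z (k - 1) i - \<rho> * (Aop m n A T (x k) i - b i) - lam (k - 1) i)
                                 / (\<tau>z + \<rho> + \<theta>))"
    and step_lam: "\<forall>k\<ge>1. lam k = (\<lambda>i. lam (k - 1) i + \<rho> * (Aop m n A T (x k) i + z k i - b i))"
  shows "\<forall>k\<ge>1.
    PhiSeq m n T f A b \<theta> \<rho> \<tau>x \<tau>z x z lam k - PhiSeq m n T f A b \<theta> \<rho> \<tau>x \<tau>z x z lam (k - 1)
    \<le> - \<eta>x * (\<Sum>t\<in>{1..T}. sqnAtA m (n t) (A t) (Dx x k t) + sqnAtA m (n t) (A t) (Dx x (k - 1) t))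
       - \<eta>z * (sqn m (Dz \<theta> \<tau>z z lam k) + sqn m (Dz \<theta> \<tau>z z lam (k - 1)))"
proof -
  define SU where "SU j = (\<Sum>t\<in>{1..T}. sqnAtA m (n t) (A t) (Dx x j t))" for j
  define DZ where "DZ j = sqn m (Dz \<theta> \<tau>z z lam j)" for j
  let ?dPhi = "\<lambda>k. PhiSeq m n T f A b \<theta> \<rho> \<tau>x \<tau>z x z lam k - PhiSeq m n T f A b \<theta> \<rho> \<tau>x \<tau>z x z lam (k - 1)"
  have "?dPhi k \<le> - \<eta>x * (SU k + SU (k - 1)) - \<eta>z * (DZ k + DZ (k - 1))" if "1 \<le> k" for k
  proof -
    have "\<forall>t\<in>{1..T}.
        subobj m n T f A b \<rho> \<tau>x t (x (k - 1)) (z (k - 1)) (lam (k - 1)) (x k t)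
        \<le> subobj m n T f A b \<rho> \<tau>x t (x (k - 1)) (z (k - 1)) (lam (k - 1)) (x (k - 1) t)"
      using step_x \<open>1 \<le> k\<close> by blast
    from PhiSeq_diff_le[OF _ _ _ \<open>1 \<le> k\<close> this step_z step_lam] params
    have "?dPhi k \<le> - \<eta>x * SU k - \<tau>x / 4 * SU (k - 1)
        + (2 * (\<theta> + \<tau>z)^2 / \<rho> - 3 * \<tau>z / 4 - (\<theta> + \<rho>) / 2) * DZ k
        + (2 * \<tau>z^2 / \<rho> - \<tau>z / 4) * DZ (k - 1)"
      by (simp add: SU_def DZ_def eta_x)
    moreover have nonneg: "0 \<le> SU (k - 1)" "0 \<le> DZ k" "0 \<le> DZ (k - 1)"
      by (simp_all add: SU_def DZ_def sqnAtA_def sqn_nonneg sum_nonneg)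
    moreover have "- \<tau>x / 4 * SU (k - 1) \<le> - \<eta>x * SU (k - 1)"
      using T_pos params nonneg by (intro mult_right_mono) (simp_all add: eta_x)
    moreover have "(2 * (\<theta> + \<tau>z)^2 / \<rho> - 3 * \<tau>z / 4 - (\<theta> + \<rho>) / 2) * DZ k \<le> - \<eta>z * DZ k"
      using params nonneg by (intro mult_right_mono) (simp_all add: eta_z field_simps)
    moreover have "\<tau>z^2 \<le> (\<theta> + \<tau>z)^2"
      using params by (intro power_mono) auto
    then have "(2 * \<tau>z^2 / \<rho> - \<tau>z / 4) * DZ (k - 1) \<le> - \<eta>z * DZ (k - 1)"
      using params nonneg by (intro mult_right_mono) (simp_all add: eta_z divide_right_mono)
    ultimately show ?thesis
      unfolding distrib_left minus_mult_left by linarith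
  qed
  then show ?thesis
    by (simp add: SU_def DZ_def sum.distrib)
qed

end
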